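(* Let $q$ be an odd prime power, $g\ge1$, $X,T$ positive integers, and let $\mathcal{Y}$ be the hyperelliptic curve over $\mathbb{F}_q$ with affine equation $y^2=f(x)$, $f(x)=x^{2g+1}+a_{2g}x^{2g}+\dots+a_0\in\mathbb{F}_q[x]$, of genus $g$. Let $J^{\mathcal{Y}}_{\max}$ be the largest integer $J$ for which there exist pairwise distinct $\lambda_1,\dots,\lambda_J\in\mathbb{F}_q$ with $f(\lambda_j)\ne0$ such that, with $h=\prod_{j=1}^J(x-\lambda_j)$, $\mathcal{Y}$ has at least $2J+X+T+6g+2$ affine $\mathbb{F}_q$-rational points $P$ with $y(P)\ne0$, $h(P)\ne0$. Then $$J^{\mathcal{Y}}_{\max}\le\left\lfloor\frac{2q-(X+T+6g+2)}{4}\right\rfloor,$$ and in particular $$\mathcal{R}^{\mathcal{Y}}_{\max}:=\frac{2J^{\mathcal{Y}}_{\max}-g}{2J^{\mathcal{Y}}_{\max}+X+T+5g+2}\le\frac{2q-(X+T+8g+2)}{2q+X+T+4g+2}.$$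
   Context: $\mathcal{R}^{\mathcal{Y}}_{\max}$ is the maximal rate $L/N$ (with $L=2J-g$, $N=L+X+T+6g+2$) of the known $X$-secure $T$-private PIR construction from hyperelliptic curves. *)

theory Defs
  imports Complex_Main "HOL-Computational_Algebra.Polynomial_Factorial" "HOL-Computational_Algebra.Squarefree"
begin

definition good_points :: "'a::{finite,field} poly \<Rightarrow> 'a poly \<Rightarrow> ('a \<times> 'a) set" where
  "good_points f h = {(a, b). b ^ 2 = poly f a \<and> b \<noteq> 0 \<and> poly h a \<noteq> 0}"

definition admissible_J :: "'a::{finite,field} poly \<Rightarrow> nat \<Rightarrow> nat \<Rightarrow> nat \<Rightarrow> nat \<Rightarrow> bool" where
  "admissible_J f g X T J \<longleftrightarrow>
     (\<exists>lam :: nat \<Rightarrow> 'a. inj_on lam {..<J} \<and> (\<forall>j<J. poly f (lam j) \<noteq> 0) \<and>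
        card (good_points f (\<Prod>j<J. [:- lam j, 1:])) \<ge> 2 * J + X + T + 6 * g + 2)"

definition J_max :: "'a::{finite,field} poly \<Rightarrow> nat \<Rightarrow> nat \<Rightarrow> nat \<Rightarrow> nat" where
  "J_max f g X T = Max {J. admissible_J f g X T J}"

definition R_max :: "'a::{finite,field} poly \<Rightarrow> nat \<Rightarrow> nat \<Rightarrow> nat \<Rightarrow> real" where
  "R_max f g X T = (2 * real (J_max f g X T) - real g) /
                   (2 * real (J_max f g X T) + real X + real T + 5 * real g + 2)"

end

theory Submission
  imports Defs
begin

text \<open>Only the counting argument is needed: a good point lies over one of the q - J
  elements a with h(a) \<noteq> 0, and over each such a there are at most two square roots b of
  f(a). Hence 2J + X + T + 6g + 2 \<le> 2(q - J); the rate bound follows because the rate is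
  increasing in J.\<close>

lemma card_square_roots_le_2:
  fixes c :: "'a::idom"
  shows "card {b. b ^ 2 = c} \<le> 2"
proof (cases "\<exists>b0. b0 ^ 2 = c")
  case True
  then obtain b0 where b0: "b0 ^ 2 = c" by blast
  have "{b. b ^ 2 = c} \<subseteq> {b0, -b0}"
  proof
    fix b assume "b \<in> {b. b ^ 2 = c}"
    then have "(b - b0) * (b + b0) = 0"
      using b0 by (simp add: algebra_simps power2_eq_square)
    then show "b \<in> {b0, -b0}" by (auto simp: eq_neg_iff_add_eq_0)
  qed
  then have "card {b. b ^ 2 = c} \<le> card {b0, -b0}" by (intro card_mono) auto
  also have "\<dots> \<le> 2" by (simp add: card_insert_if)
  finally show ?thesis .
qed simp

lemma card_good_points_le:
  fixes f h :: "'a::{finite,field} poly"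
  shows "card (good_points f h) \<le> 2 * card {a. poly h a \<noteq> 0}"
proof -
  let ?A = "{a. poly h a \<noteq> 0}"
  have "card (good_points f h) \<le> card (Sigma ?A (\<lambda>a. {b. b ^ 2 = poly f a}))"
    by (intro card_mono) (auto simp: good_points_def)
  also have "\<dots> = (\<Sum>a\<in>?A. card {b. b ^ 2 = poly f a})"
    by (simp add: card_SigmaI)
  also have "\<dots> \<le> (\<Sum>a\<in>?A. 2)"
    by (intro sum_mono card_square_roots_le_2)
  finally show ?thesis by simp
qed

lemma poly_prod_linear_eq_0_iff:
  fixes lam :: "'b \<Rightarrow> 'a::idom"
  assumes "finite S"
  shows "poly (\<Prod>j\<in>S. [:- lam j, 1:]) a = 0 \<longleftrightarrow> a \<in> lam ` S"
  using assms by (auto simp: poly_prod)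

lemma card_nonroots_prod_linear:
  fixes lam :: "nat \<Rightarrow> 'a::{finite,field}"
  assumes "inj_on lam {..<J}"
  shows "card {a. poly (\<Prod>j<J. [:- lam j, 1:]) a \<noteq> 0} = card (UNIV :: 'a set) - J"
proof -
  have "{a. poly (\<Prod>j<J. [:- lam j, 1:]) a \<noteq> 0} = UNIV - lam ` {..<J}"
    by (auto simp: poly_prod_linear_eq_0_iff)
  then show ?thesis
    using assms by (simp add: card_Diff_subset card_image)
qed

lemma admissible_J_le:
  fixes f :: "'a::{finite,field} poly"
  assumes "admissible_J f g X T J"
  shows "4 * J + (X + T + 6 * g + 2) \<le> 2 * card (UNIV :: 'a set)"
proof -
  obtain lam :: "nat \<Rightarrow> 'a" where inj: "inj_on lam {..<J}"
    and many: "2 * J + X + T + 6 * g + 2 \<le> card (good_points f (\<Prod>j<J. [:- lam j, 1:]))"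
    using assms unfolding admissible_J_def by blast
  have "J \<le> card (UNIV :: 'a set)"
    using card_image[OF inj] card_mono[of UNIV "lam ` {..<J}"] by simp
  moreover have "card (good_points f (\<Prod>j<J. [:- lam j, 1:])) \<le> 2 * (card (UNIV :: 'a set) - J)"
    using card_good_points_le card_nonroots_prod_linear[OF inj] by metis
  ultimately show ?thesis using many by linarith
qed

lemma admissible_J_max:
  fixes f :: "'a::{finite,field} poly"
  assumes "{J. admissible_J f g X T J} \<noteq> {}"
  shows "admissible_J f g X T (J_max f g X T)"
proof -
  have "finite {J. admissible_J f g X T J}"
    by (rule finite_subset[of _ "{..card (UNIV :: 'a set)}"]) (auto dest: admissible_J_le)
  then show ?thesis
    unfolding J_max_def using Max_in assms by blast
qed

lemma rate_le_of_size_bound: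
  fixes J q c g :: real
  assumes "4 * J + c \<le> 2 * q" and "0 \<le> J" and "0 \<le> g" and "g < c"
  shows "(2 * J - g) / (2 * J + c - g) \<le> (2 * q - c - 2 * g) / (2 * q + c - 2 * g)"
proof -
  have "(2 * q - c - 2 * g) * (2 * J + c - g) - (2 * J - g) * (2 * q + c - 2 * g)
        = c * (2 * q - 4 * J - c)"
    by (simp add: algebra_simps)
  also have "\<dots> \<ge> 0" using assms by (intro mult_nonneg_nonneg) auto
  finally show ?thesis
    using assms by (simp add: divide_simps)
qed

theorem corollary4p5:
  fixes f :: "'a::{finite,field} poly" and q g X T :: nat
  assumes "card (UNIV :: 'a set) = q" and "odd q"
    and "g \<ge> 1" and "X \<ge> 1" and "T \<ge> 1"
    and "lead_coeff f = 1" and "degree f = 2 * g + 1" and "squarefree f"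
  shows "{J. admissible_J f g X T J} \<noteq> {} \<longrightarrow>
      int (J_max f g X T) \<le> \<lfloor>(2 * real q - (real X + real T + 6 * real g + 2)) / 4\<rfloor> \<and>
      R_max f g X T \<le> (2 * real q - (real X + real T + 8 * real g + 2)) /
                       (2 * real q + real X + real T + 4 * real g + 2)"
proof
  assume "{J. admissible_J f g X T J} \<noteq> {}"
  define J where "J = J_max f g X T"
  define c where "c = real X + real T + 6 * real g + 2"
  have "4 * J + (X + T + 6 * g + 2) \<le> 2 * q"
    using admissible_J_le admissible_J_max[OF \<open>_ \<noteq> {}\<close>] assms(1) unfolding J_def by blast
  then have size: "4 * real J + c \<le> 2 * real q"
    unfolding c_def by linarith
  have "int J \<le> \<lfloor>(2 * real q - c) / 4\<rfloor>"
    using size by (simp add: le_floor_iff field_simps)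
  moreover have "R_max f g X T \<le> (2 * real q - c - 2 * real g) / (2 * real q + c - 2 * real g)"
    using rate_le_of_size_bound[OF size, of "real g"] unfolding R_max_def J_def[symmetric] c_def
    by (simp add: algebra_simps)
  ultimately show "int (J_max f g X T) \<le> \<lfloor>(2 * real q - (real X + real T + 6 * real g + 2)) / 4\<rfloor> \<and>
      R_max f g X T \<le> (2 * real q - (real X + real T + 8 * real g + 2)) /
                       (2 * real q + real X + real T + 4 * real g + 2)"
    unfolding J_def c_def by (simp add: algebra_simps)
qed

end
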